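(* Let $X_1,\dots,X_n$ be i.i.d. positive-integer-valued random variables with order statistics $X_{1,n}\ge\dots\ge X_{n,n}$, and let $M_n=\min\big(n,\inf\{k:X_{k,n}\le k\}\big)$. Then: (i) $M_n$ is a self-bounded random variable (as a function of $X_1,\dots,X_n$); (ii) $\operatorname{var}(M_n)\le\mathbb E M_n$, and for all $\lambda\in\mathbb R$, $\log\mathbb E\big[e^{\lambda(M_n-\mathbb E M_n)}\big]\le\mathbb E M_n\,(e^\lambda-\lambda-1)$; (iii) for all $t>0$, $$\mathbb P\{M_n-\mathbb E M_n\ge t\}\le\exp\Big(-\frac{t^2}{2(\mathbb E M_n+t/3)}\Big),\qquad \mathbb P\{M_n-\mathbb E M_n\le -t\}\le\exp\Big(-\frac{t^2}{2\,\mathbb E M_n}\Big).$$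
   Context: A non-negative random variable $Z=g(X_1,\dots,X_n)$ is self-bounded if there exist measurable functions $g_i$ such that, with $Z_i=g_i(X_1,\dots,X_{i-1},X_{i+1},\dots,X_n)$, one has $0\le Z-Z_i\le1$ for each $i\le n$ and $\sum_{i=1}^n(Z-Z_i)\le Z$. The logarithm in (ii) is natural. *)

theory Defs
  imports "HOL-Probability.Probability"
begin

definition ord_stat :: "nat \<Rightarrow> (nat \<Rightarrow> nat) \<Rightarrow> nat \<Rightarrow> nat" where
  "ord_stat n x k = rev (sort (map x [0..<n])) ! (k - 1)"

definition Mn_fun :: "nat \<Rightarrow> (nat \<Rightarrow> nat) \<Rightarrow> nat" where
  "Mn_fun n x =
     (if \<exists>k. 1 \<le> k \<and> k \<le> n \<and> ord_stat n x k \<le> k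
      then min n (LEAST k. 1 \<le> k \<and> k \<le> n \<and> ord_stat n x k \<le> k)
      else n)"

text \<open>Self-boundedness of Z = g(x_0,...,x_{n-1}) for arguments ranging in S:
  there are functions g_i not depending on the i-th coordinate (this is enforced
  by evaluating them at x(i := undefined)) with 0 <= Z - Z_i <= 1 and
  sum_i (Z - Z_i) <= Z; also Z >= 0.  (All functions on the discrete space
  are measurable.)\<close>
definition self_bounded :: "nat \<Rightarrow> 'b set \<Rightarrow> ((nat \<Rightarrow> 'b) \<Rightarrow> real) \<Rightarrow> bool" where
  "self_bounded n S g \<longleftrightarrow>
     (\<exists>gi :: nat \<Rightarrow> (nat \<Rightarrow> 'b) \<Rightarrow> real.
        \<forall>x. (\<forall>j<n. x j \<in> S) \<longrightarrow>
           0 \<le> g x \<and>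
           (\<forall>i<n. 0 \<le> g x - gi i (x(i := undefined)) \<and> g x - gi i (x(i := undefined)) \<le> 1) \<and>
           (\<Sum>i<n. g x - gi i (x(i := undefined))) \<le> g x)"

end

theory Submission
  imports Defs
begin

text \<open>Write N(k) for the number of sample points exceeding k. Since the order statistics are
  decreasing, X_{k,n} \<le> k holds iff N(k) < k, so the levels k \<le> n with k \<le> N(k) form an initial
  segment {1..h}, and M_n = min(n, h + 1). Lowering one coordinate to 1 lowers each N(k) by at most
  one, hence h by at most one; and if it lowers h at all, then N(h) = h and the coordinate exceeds h,
  which leaves at most h = M_n - 1 candidates. So M_n is self-bounded, with Z_i obtained by setting
  the i-th coordinate to 1.

  M_n only sees the sample truncated at n + 1, so all expectations are finite sums over a product of
  finite distributions. On such a space the Efron-Stein inequality and the tensorization of entropy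
  are proved by induction on the number of coordinates. For self-bounded functions they give
  var Z \<le> E Z and the differential inequality (1 - e^{-\<lambda>}) F'(\<lambda>) \<le> F(\<lambda>) ln F(\<lambda>) for the moment
  generating function F; Herbst's argument (ln F(\<lambda>) / (e^\<lambda> - 1) is nonincreasing and tends to E Z
  at 0) yields the bound on the log-moment generating function, and Chernoff's method together with
  elementary bounds on e^\<lambda> - \<lambda> - 1 yields the tails.\<close>

section \<open>The variable M_n as a shifted h-index\<close>

lemma sorted_nth_le_iff_card:
  fixes s :: "nat list"
  assumes "sorted s" "i < length s"
  shows "s ! i \<le> k \<longleftrightarrow> i < card {j. j < length s \<and> s ! j \<le> k}"
proof
  assume h: "s ! i \<le> k"
  have "{..i} \<subseteq> {j. j < length s \<and> s ! j \<le> k}"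
    using assms h by (auto intro: order_trans[OF sorted_nth_mono])
  from card_mono[OF _ this] show "i < card {j. j < length s \<and> s ! j \<le> k}" by simp
next
  assume h: "i < card {j. j < length s \<and> s ! j \<le> k}"
  show "s ! i \<le> k"
  proof (rule ccontr)
    assume "\<not> s ! i \<le> k"
    then have "{j. j < length s \<and> s ! j \<le> k} \<subseteq> {..<i}"
      using assms by (auto simp: not_le) (metis leI le_trans less_le_not_le sorted_nth_mono)
    from card_mono[OF _ this] h show False by simp
  qed
qed

definition num_above :: "nat \<Rightarrow> (nat \<Rightarrow> nat) \<Rightarrow> nat \<Rightarrow> nat" where
  "num_above n x k = card {j. j < n \<and> k < x j}"

lemma num_above_antimono: "k \<le> k' \<Longrightarrow> num_above n x k' \<le> num_above n x k"
  unfolding num_above_def by (rule card_mono) auto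

lemma card_le_plus_num_above: "card {j. j < n \<and> x j \<le> k} + num_above n x k = n"
proof -
  have "card {j. j < n \<and> x j \<le> k} + num_above n x k
      = card ({j. j < n \<and> x j \<le> k} \<union> {j. j < n \<and> k < x j})"
    unfolding num_above_def by (rule card_Un_disjoint[symmetric]) auto
  also have "{j. j < n \<and> x j \<le> k} \<union> {j. j < n \<and> k < x j} = {..<n}" by auto
  finally show ?thesis by simp
qed

lemma ord_stat_le_iff_num_above:
  assumes "1 \<le> k" "k \<le> n"
  shows "ord_stat n x k \<le> k \<longleftrightarrow> num_above n x k < k"
proof -
  let ?l = "map x [0..<n]"
  let ?s = "sort ?l"
  have "ord_stat n x k = ?s ! (n - k)"
    unfolding ord_stat_def using assms by (simp add: rev_nth Suc_diff_le)
  moreover have "?s ! (n - k) \<le> k \<longleftrightarrow> n - k < card {j. j < length ?s \<and> ?s ! j \<le> k}"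
    by (rule sorted_nth_le_iff_card) (use assms in auto)
  moreover have "card {j. j < length ?s \<and> ?s ! j \<le> k} = card {j. j < n \<and> x j \<le> k}"
  proof -
    have "card {j. j < length ?s \<and> ?s ! j \<le> k} = length (filter (\<lambda>v. v \<le> k) ?s)"
      by (simp add: length_filter_conv_card)
    also have "\<dots> = length (filter (\<lambda>v. v \<le> k) ?l)"
      by (simp add: filter_sort)
    also have "\<dots> = card {j. j < n \<and> x j \<le> k}"
      unfolding length_filter_conv_card by (intro arg_cong[where f=card]) auto
    finally show ?thesis .
  qed
  ultimately show ?thesis using assms card_le_plus_num_above[of n x k] by linarith
qed

definition h_levels :: "nat \<Rightarrow> (nat \<Rightarrow> nat) \<Rightarrow> nat set" where
  "h_levels n x = {k. 1 \<le> k \<and> k \<le> n \<and> k \<le> num_above n x k}"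

lemma mem_h_levels: "k \<in> h_levels n x \<longleftrightarrow> 1 \<le> k \<and> k \<le> n \<and> k \<le> num_above n x k"
  unfolding h_levels_def by simp

lemma h_levels_subset: "h_levels n x \<subseteq> {1..n}"
  unfolding h_levels_def by auto

lemma finite_h_levels [simp]: "finite (h_levels n x)"
  using finite_subset[OF h_levels_subset] by blast

lemma h_levels_eq_interval: "h_levels n x = {1..card (h_levels n x)}"
proof (cases "h_levels n x = {}")
  case False
  let ?m = "Max (h_levels n x)"
  have m: "?m \<in> h_levels n x" using Max_in[OF finite_h_levels False] .
  have "h_levels n x = {1..?m}"
  proof (intro equalityI subsetI)
    fix k assume "k \<in> h_levels n x"
    then show "k \<in> {1..?m}" by (auto simp: h_levels_def)
  next
    fix k assume "k \<in> {1..?m}"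
    with m num_above_antimono[of k ?m n x] show "k \<in> h_levels n x"
      by (auto simp: h_levels_def)
  qed
  then obtain m where "h_levels n x = {1..m}" by blast
  then show ?thesis by simp
qed simp

lemma mem_h_levels_iff_le_card: "k \<in> h_levels n x \<longleftrightarrow> 1 \<le> k \<and> k \<le> card (h_levels n x)"
proof -
  obtain m where "h_levels n x = {1..m}" using h_levels_eq_interval by blast
  then show ?thesis by simp
qed

lemma Mn_fun_eq_h_index: "Mn_fun n x = min n (Suc (card (h_levels n x)))"
proof -
  let ?h = "card (h_levels n x)"
  have hn: "?h \<le> n"
    using card_mono[OF _ h_levels_subset, of n x] by simp
  have stop_iff: "ord_stat n x k \<le> k \<longleftrightarrow> ?h < k" if k: "1 \<le> k" "k \<le> n" for k
  proof -
    have "k \<le> ?h \<longleftrightarrow> k \<in> h_levels n x" using k by (simp add: mem_h_levels_iff_le_card)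
    moreover have "k \<in> h_levels n x \<longleftrightarrow> k \<le> num_above n x k"
      using k by (simp add: mem_h_levels)
    ultimately show ?thesis using ord_stat_le_iff_num_above[OF k, of x] by auto
  qed
  show ?thesis
  proof (cases "?h < n")
    case True
    have "(LEAST k. 1 \<le> k \<and> k \<le> n \<and> ord_stat n x k \<le> k) = Suc ?h"
      by (rule Least_equality) (use True stop_iff in auto)
    moreover have "\<exists>k. 1 \<le> k \<and> k \<le> n \<and> ord_stat n x k \<le> k"
      using True stop_iff[of "Suc ?h"] by (intro exI[of _ "Suc ?h"]) auto
    ultimately show ?thesis using True unfolding Mn_fun_def by simp
  next
    case False
    then have "?h = n" using hn by simp
    then have "\<not> (\<exists>k. 1 \<le> k \<and> k \<le> n \<and> ord_stat n x k \<le> k)" using stop_iff by auto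
    then have "Mn_fun n x = n" unfolding Mn_fun_def by (rule if_not_P)
    then show ?thesis using \<open>?h = n\<close> by simp
  qed
qed

lemma Mn_fun_truncate:
  assumes "\<forall>j<n. y j = min (x j) (Suc n)"
  shows "Mn_fun n y = Mn_fun n x"
proof -
  have "num_above n y k = num_above n x k" if "k \<le> n" for k
    unfolding num_above_def using assms that by (intro arg_cong[where f=card]) auto
  then have "h_levels n y = h_levels n x" unfolding h_levels_def by auto
  then show ?thesis unfolding Mn_fun_eq_h_index by simp
qed

section \<open>Self-boundedness\<close>

lemma num_above_lower_coordinate:
  assumes "i < n" "1 \<le> k"
  shows "num_above n (x(i := 1)) k + (if k < x i then 1 else 0) = num_above n x k"
proof -
  have "{j. j < n \<and> k < (x(i := 1)) j} = {j. j < n \<and> k < x j} - {i}"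
    using assms by auto
  moreover have "i \<in> {j. j < n \<and> k < x j} \<Longrightarrow> card {j. j < n \<and> k < x j} > 0"
    by (auto simp: card_gt_0_iff)
  ultimately show ?thesis
    unfolding num_above_def using assms by (auto simp: card_Diff_singleton_if)
qed

lemma h_levels_lower_coordinate_subset:
  assumes "i < n"
  shows "h_levels n (x(i := 1)) \<subseteq> h_levels n x"
proof
  fix k assume k: "k \<in> h_levels n (x(i := 1))"
  then have "1 \<le> k" unfolding mem_h_levels by auto
  with k num_above_lower_coordinate[OF assms this, of x] show "k \<in> h_levels n x"
    unfolding mem_h_levels by auto
qed

lemma h_levels_lower_coordinate_supset:
  assumes "i < n"
  shows "{1..card (h_levels n x) - 1} \<subseteq> h_levels n (x(i := 1))"
proof
  fix k assume k: "k \<in> {1..card (h_levels n x) - 1}"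
  then have "Suc k \<in> h_levels n x" by (simp add: mem_h_levels_iff_le_card) arith
  then have "Suc k \<le> num_above n x (Suc k)" "Suc k \<le> n" unfolding mem_h_levels by auto
  moreover have "num_above n x (Suc k) \<le> num_above n x k" by (rule num_above_antimono) simp
  moreover note num_above_lower_coordinate[OF assms, of k x]
  ultimately show "k \<in> h_levels n (x(i := 1))"
    using k unfolding mem_h_levels by (auto split: if_splits)
qed

lemma Mn_fun_lower_coordinate:
  assumes "i < n"
  shows "Mn_fun n (x(i := 1)) \<le> Mn_fun n x" "Mn_fun n x \<le> Suc (Mn_fun n (x(i := 1)))"
proof -
  have "card (h_levels n (x(i := 1))) \<le> card (h_levels n x)"
    by (rule card_mono[OF _ h_levels_lower_coordinate_subset[OF assms]]) simp
  moreover have "card (h_levels n x) - 1 \<le> card (h_levels n (x(i := 1)))"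
    using card_mono[OF _ h_levels_lower_coordinate_supset[OF assms]] by simp
  ultimately show "Mn_fun n (x(i := 1)) \<le> Mn_fun n x" "Mn_fun n x \<le> Suc (Mn_fun n (x(i := 1)))"
    unfolding Mn_fun_eq_h_index by auto
qed

lemma Mn_fun_drop_bounds:
  assumes "i < n"
  shows "0 \<le> real (Mn_fun n x) - real (Mn_fun n (x(i := 1)))"
    "real (Mn_fun n x) - real (Mn_fun n (x(i := 1))) \<le> 1"
  using Mn_fun_lower_coordinate[OF assms, of x] by simp_all

lemma card_Mn_fun_decreasing_le:
  "card {i. i < n \<and> Mn_fun n (x(i := 1)) < Mn_fun n x} \<le> Mn_fun n x"
proof (cases "Mn_fun n x = n")
  case True
  then show ?thesis using card_mono[of "{..<n}" "{i. i < n \<and> Mn_fun n (x(i := 1)) < Mn_fun n x}"]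
    by auto
next
  case False
  let ?h = "card (h_levels n x)"
  have M: "Mn_fun n x = Suc ?h" using False unfolding Mn_fun_eq_h_index by auto
  have drop: "?h \<in> h_levels n x \<and> ?h \<notin> h_levels n (x(i := 1))"
    if "Mn_fun n (x(i := 1)) < Mn_fun n x" for i
  proof -
    have "card (h_levels n (x(i := 1))) < ?h"
      using that M unfolding Mn_fun_eq_h_index by auto
    then show ?thesis by (simp add: mem_h_levels_iff_le_card)
  qed
  have exceeds: "?h < x i \<and> num_above n x ?h = ?h"
    if "i < n" "Mn_fun n (x(i := 1)) < Mn_fun n x" for i
    using drop[OF that(2)] num_above_lower_coordinate[OF that(1), of ?h x]
    unfolding mem_h_levels by (auto split: if_splits)
  show ?thesis
  proof (cases "\<exists>i<n. Mn_fun n (x(i := 1)) < Mn_fun n x")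
    case True
    then obtain i0 where "i0 < n" "Mn_fun n (x(i0 := 1)) < Mn_fun n x" by blast
    then have "num_above n x ?h = ?h" using exceeds by blast
    moreover have "card {i. i < n \<and> Mn_fun n (x(i := 1)) < Mn_fun n x} \<le> num_above n x ?h"
      unfolding num_above_def by (rule card_mono) (auto dest: exceeds)
    ultimately show ?thesis using M by simp
  next
    case False
    then have "card {i. i < n \<and> Mn_fun n (x(i := 1)) < Mn_fun n x} = 0"
      by (auto simp: card_eq_0_iff)
    then show ?thesis by linarith
  qed
qed

lemma Mn_fun_self_bounding_sum:
  "(\<Sum>i<n. real (Mn_fun n x) - real (Mn_fun n (x(i := 1)))) \<le> real (Mn_fun n x)"
proof -
  let ?A = "{i. i < n \<and> Mn_fun n (x(i := 1)) < Mn_fun n x}"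
  have "(\<Sum>i<n. real (Mn_fun n x) - real (Mn_fun n (x(i := 1))))
      \<le> (\<Sum>i<n. if i \<in> ?A then 1 else 0)"
  proof (rule sum_mono)
    fix i assume "i \<in> {..<n}"
    then show "real (Mn_fun n x) - real (Mn_fun n (x(i := 1))) \<le> (if i \<in> ?A then 1 else 0)"
      using Mn_fun_drop_bounds[of i n x] by auto
  qed
  also have "\<dots> = real (card ?A)" by (simp add: sum.If_cases Int_def)
  also have "\<dots> \<le> real (Mn_fun n x)" using card_Mn_fun_decreasing_le[of n x] by simp
  finally show ?thesis .
qed

lemma self_bounded_Mn_fun: "self_bounded n {1..} (\<lambda>x. real (Mn_fun n x))"
  unfolding self_bounded_def
  by (intro exI[of _ "\<lambda>i y. real (Mn_fun n (y(i := 1)))"])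
    (use Mn_fun_drop_bounds Mn_fun_self_bounding_sum in simp)

section \<open>Expectations on a finite product space\<close>

text \<open>prod_expect p S n f is the expectation of f when the coordinates x 0, ..., x (n - 1) are
  independent with P(x i = v) = p i v for v \<in> S; the remaining coordinates are left undefined.\<close>
fun prod_expect :: "(nat \<Rightarrow> 'b \<Rightarrow> real) \<Rightarrow> 'b set \<Rightarrow> nat \<Rightarrow> ((nat \<Rightarrow> 'b) \<Rightarrow> real) \<Rightarrow> real" where
  "prod_expect p S 0 f = f (\<lambda>_. undefined)"
| "prod_expect p S (Suc n) f = (\<Sum>v\<in>S. p n v * prod_expect p S n (\<lambda>x. f (x(n := v))))"

definition ignores_coordinate :: "nat \<Rightarrow> 'b set \<Rightarrow> nat \<Rightarrow> ((nat \<Rightarrow> 'b) \<Rightarrow> real) \<Rightarrow> bool" where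
  "ignores_coordinate n S i g \<longleftrightarrow> (\<forall>x v. (\<forall>j<n. x j \<in> S) \<longrightarrow> v \<in> S \<longrightarrow> g (x(i := v)) = g x)"

lemma fun_upd_coordinates_in: "\<forall>j<n. x j \<in> S \<Longrightarrow> v \<in> S \<Longrightarrow> \<forall>j<Suc n. (x(n := v)) j \<in> S"
  by (auto simp: less_Suc_eq)

lemma ignores_coordinate_fix_last:
  assumes "ignores_coordinate (Suc n) S i g" "i < n" "v \<in> S"
  shows "ignores_coordinate n S i (\<lambda>x. g (x(n := v)))"
  unfolding ignores_coordinate_def
proof (intro allI impI)
  fix x u assume x: "\<forall>j<n. x j \<in> S" and u: "u \<in> S"
  have "g ((x(n := v))(i := u)) = g (x(n := v))"
    using assms fun_upd_coordinates_in[OF x assms(3)] u unfolding ignores_coordinate_def by blast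
  then show "g ((x(i := u))(n := v)) = g (x(n := v))"
    using \<open>i < n\<close> by (simp add: fun_upd_twist)
qed

locale product_weights =
  fixes p :: "nat \<Rightarrow> 'b \<Rightarrow> real" and S :: "'b set"
  assumes finite_support: "finite S"
    and weight_nonneg: "\<And>i v. v \<in> S \<Longrightarrow> 0 \<le> p i v"
    and weights_sum_1: "\<And>i. (\<Sum>v\<in>S. p i v) = 1"
begin

abbreviation E where "E \<equiv> prod_expect p S"

lemma support_nonempty: "S \<noteq> {}"
  using weights_sum_1[of 0] by auto

lemma prod_expect_cong: "(\<And>x. \<forall>j<n. x j \<in> S \<Longrightarrow> f x = g x) \<Longrightarrow> E n f = E n g"
proof (induction n arbitrary: f g)
  case (Suc n)
  have "E n (\<lambda>x. f (x(n := v))) = E n (\<lambda>x. g (x(n := v)))" if "v \<in> S" for v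
    by (rule Suc.IH) (erule Suc.prems[OF fun_upd_coordinates_in[OF _ that]])
  then show ?case unfolding prod_expect.simps by (intro sum.cong) auto
qed simp

lemma prod_expect_mono: "(\<And>x. \<forall>j<n. x j \<in> S \<Longrightarrow> f x \<le> g x) \<Longrightarrow> E n f \<le> E n g"
proof (induction n arbitrary: f g)
  case (Suc n)
  have "E n (\<lambda>x. f (x(n := v))) \<le> E n (\<lambda>x. g (x(n := v)))" if "v \<in> S" for v
    by (rule Suc.IH) (erule Suc.prems[OF fun_upd_coordinates_in[OF _ that]])
  then show ?case
    unfolding prod_expect.simps by (intro sum_mono mult_left_mono) (auto simp: weight_nonneg)
qed simp

lemma prod_expect_pos: "(\<And>x. \<forall>j<n. x j \<in> S \<Longrightarrow> 0 < f x) \<Longrightarrow> 0 < E n f"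
proof (induction n arbitrary: f)
  case (Suc n)
  have pos: "0 < E n (\<lambda>x. f (x(n := v)))" if "v \<in> S" for v
    by (rule Suc.IH) (erule Suc.prems[OF fun_upd_coordinates_in[OF _ that]])
  have "\<not> (\<forall>v\<in>S. p n v \<le> 0)"
    using weights_sum_1[of n] sum_nonpos[of S "p n"] by auto
  then obtain v0 where v0: "v0 \<in> S" "0 < p n v0" by (auto simp: not_le)
  show ?case unfolding prod_expect.simps
    by (rule sum_pos2[OF finite_support v0(1)])
      (use v0 pos weight_nonneg in \<open>auto intro: less_imp_le mult_nonneg_nonneg\<close>)
qed simp

lemma prod_expect_linear: "E n (\<lambda>x. a * f x + b * g x) = a * E n f + b * E n g"
  by (induction n arbitrary: f g) (simp_all add: sum.distrib sum_distrib_left algebra_simps)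

lemma prod_expect_const: "E n (\<lambda>_. c) = c"
  by (induction n) (simp_all add: sum_distrib_right[symmetric] weights_sum_1)

lemma prod_expect_add: "E n (\<lambda>x. f x + g x) = E n f + E n g"
  using prod_expect_linear[of n 1 f 1 g] by simp

lemma prod_expect_cmult: "E n (\<lambda>x. c * f x) = c * E n f"
  using prod_expect_linear[of n c f 0 f] by simp

lemma prod_expect_diff: "E n (\<lambda>x. f x - g x) = E n f - E n g"
  using prod_expect_linear[of n 1 f "-1" g] by simp

lemma prod_expect_sum: "finite I \<Longrightarrow> E n (\<lambda>x. \<Sum>i\<in>I. f i x) = (\<Sum>i\<in>I. E n (f i))"
  by (induction I rule: finite_induct) (simp_all add: prod_expect_const prod_expect_add)

lemma prod_expect_nonneg: "(\<And>x. \<forall>j<n. x j \<in> S \<Longrightarrow> 0 \<le> f x) \<Longrightarrow> 0 \<le> E n f"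
  using prod_expect_mono[of n "\<lambda>_. 0" f] by (simp add: prod_expect_const)

lemma prod_expect_variance: "E n (\<lambda>x. (f x - E n f)\<^sup>2) = E n (\<lambda>x. (f x)\<^sup>2) - (E n f)\<^sup>2"
proof -
  define c where "c = E n f"
  have "E n (\<lambda>x. (f x - c)\<^sup>2) = E n (\<lambda>x. (1 * (f x)\<^sup>2 + (-2 * c) * f x) + c\<^sup>2)"
    by (rule prod_expect_cong) (simp add: power2_eq_square algebra_simps)
  also have "\<dots> = E n (\<lambda>x. 1 * (f x)\<^sup>2 + (-2 * c) * f x) + c\<^sup>2"
    using prod_expect_add[of n "\<lambda>x. 1 * (f x)\<^sup>2 + (-2 * c) * f x" "\<lambda>_. c\<^sup>2"]
    by (simp only: prod_expect_const)
  also have "\<dots> = E n (\<lambda>x. (f x)\<^sup>2) - 2 * c * c + c\<^sup>2"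
    using prod_expect_linear[of n 1 "\<lambda>x. (f x)\<^sup>2" "-2 * c" f] unfolding c_def by simp
  finally show ?thesis unfolding c_def by (simp add: power2_eq_square)
qed

lemma square_prod_expect_le: "(E n f)\<^sup>2 \<le> E n (\<lambda>x. (f x)\<^sup>2)"
  using prod_expect_nonneg[of n "\<lambda>x. (f x - E n f)\<^sup>2"] by (simp add: prod_expect_variance)

lemma prod_expect_ignores_last:
  assumes "ignores_coordinate (Suc n) S n g" "v \<in> S" "u \<in> S"
  shows "E n (\<lambda>x. g (x(n := v))) = E n (\<lambda>x. g (x(n := u)))"
proof (rule prod_expect_cong)
  fix x assume "\<forall>j<n. x j \<in> S"
  then have "\<forall>j<Suc n. (x(n := u)) j \<in> S" using \<open>u \<in> S\<close> by (rule fun_upd_coordinates_in)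
  then have "g ((x(n := u))(n := v)) = g (x(n := u))"
    using assms(1,2) unfolding ignores_coordinate_def by blast
  then show "g (x(n := v)) = g (x(n := u))" by simp
qed

text \<open>Conditioning on the last coordinate splits the variance into the mean conditional variance
  and the variance of the conditional mean; the latter is at most the mean square distance from
  the conditional mean of g n, which does not depend on the last coordinate.\<close>
theorem efron_stein:
  assumes "\<And>i. i < n \<Longrightarrow> ignores_coordinate n S i (g i)"
  shows "E n (\<lambda>x. (f x)\<^sup>2) - (E n f)\<^sup>2 \<le> (\<Sum>i<n. E n (\<lambda>x. (f x - g i x)\<^sup>2))"
  using assms
proof (induction n arbitrary: f g)
  case (Suc n)
  define fv where "fv v = (\<lambda>x. f (x(n := v)))" for v
  define gv where "gv v i = (\<lambda>x. g i (x(n := v)))" for v i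
  define a where "a v = E n (fv v)" for v
  obtain v0 where v0: "v0 \<in> S" using support_nonempty by auto
  define b where "b = E n (gv v0 n)"
  define A where "A = (\<Sum>v\<in>S. p n v * a v)"
  have cond_var: "E n (\<lambda>x. (fv v x)\<^sup>2) - (a v)\<^sup>2 \<le> (\<Sum>i<n. E n (\<lambda>x. (fv v x - gv v i x)\<^sup>2))"
    if "v \<in> S" for v
    unfolding a_def fv_def gv_def
    by (rule Suc.IH, rule ignores_coordinate_fix_last[OF Suc.prems]) (simp_all add: that)
  have var_of_mean: "(\<Sum>v\<in>S. p n v * (a v)\<^sup>2) - A\<^sup>2 \<le> (\<Sum>v\<in>S. p n v * (a v - b)\<^sup>2)"
  proof -
    have expand: "p n v * (a v - b)\<^sup>2 = p n v * (a v)\<^sup>2 + (-2 * b) * (p n v * a v) + b\<^sup>2 * p n v"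
      for v by (simp add: power2_eq_square algebra_simps)
    have "(\<Sum>v\<in>S. p n v * (a v - b)\<^sup>2) = (\<Sum>v\<in>S. p n v * (a v)\<^sup>2) + (-2 * b) * A + b\<^sup>2"
      unfolding expand sum.distrib sum_distrib_left[symmetric] weights_sum_1 A_def by simp
    moreover have "0 \<le> (A - b)\<^sup>2" by simp
    ultimately show ?thesis by (simp add: power2_eq_square algebra_simps)
  qed
  have mean_dist: "(a v - b)\<^sup>2 \<le> E n (\<lambda>x. (fv v x - gv v n x)\<^sup>2)" if "v \<in> S" for v
  proof -
    have "b = E n (gv v n)"
      unfolding b_def gv_def by (rule prod_expect_ignores_last[OF Suc.prems[OF lessI] v0 that])
    then have "a v - b = E n (\<lambda>x. fv v x - gv v n x)"
      unfolding a_def prod_expect_diff by simp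
    then show ?thesis using square_prod_expect_le by simp
  qed
  have "E (Suc n) (\<lambda>x. (f x)\<^sup>2) - (E (Suc n) f)\<^sup>2 =
      (\<Sum>v\<in>S. p n v * (E n (\<lambda>x. (fv v x)\<^sup>2) - (a v)\<^sup>2)) + ((\<Sum>v\<in>S. p n v * (a v)\<^sup>2) - A\<^sup>2)"
    by (simp add: A_def a_def fv_def sum_subtractf right_diff_distrib)
  also have "\<dots> \<le> (\<Sum>v\<in>S. p n v * (\<Sum>i<n. E n (\<lambda>x. (fv v x - gv v i x)\<^sup>2)))
      + (\<Sum>v\<in>S. p n v * E n (\<lambda>x. (fv v x - gv v n x)\<^sup>2))"
  proof (rule add_mono)
    show "(\<Sum>v\<in>S. p n v * (E n (\<lambda>x. (fv v x)\<^sup>2) - (a v)\<^sup>2))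
        \<le> (\<Sum>v\<in>S. p n v * (\<Sum>i<n. E n (\<lambda>x. (fv v x - gv v i x)\<^sup>2)))"
      by (rule sum_mono, rule mult_left_mono[OF cond_var weight_nonneg])
    have "(\<Sum>v\<in>S. p n v * (a v - b)\<^sup>2) \<le> (\<Sum>v\<in>S. p n v * E n (\<lambda>x. (fv v x - gv v n x)\<^sup>2))"
      by (rule sum_mono, rule mult_left_mono[OF mean_dist weight_nonneg])
    with var_of_mean show "(\<Sum>v\<in>S. p n v * (a v)\<^sup>2) - A\<^sup>2
        \<le> (\<Sum>v\<in>S. p n v * E n (\<lambda>x. (fv v x - gv v n x)\<^sup>2))" by linarith
  qed
  also have "\<dots> = (\<Sum>i<Suc n. E (Suc n) (\<lambda>x. (f x - g i x)\<^sup>2))"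
    unfolding sum.lessThan_Suc prod_expect.simps fv_def gv_def sum_distrib_left
    by (simp only: sum.swap[of _ S])
  finally show ?case .
qed simp

lemma ln_tangent_bound:
  fixes f h a b :: real
  assumes "0 < f" "0 < h" "0 < a" "0 < b"
  shows "f * ln (a / b) + f - h * (a / b) \<le> f * ln (f / h)"
proof -
  have "ln ((h * a) / (f * b)) \<le> (h * a) / (f * b) - 1"
    by (rule ln_le_minus_one) (use assms in simp)
  moreover have "ln ((h * a) / (f * b)) = ln h + ln a - ln f - ln b"
    using assms by (simp add: ln_div ln_mult)
  ultimately have "f * (ln h + ln a - ln f - ln b) \<le> f * ((h * a) / (f * b) - 1)"
    using assms by (intro mult_left_mono) auto
  moreover have "f * ((h * a) / (f * b) - 1) = h * (a / b) - f"
    using assms by (simp add: field_simps)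
  ultimately show ?thesis using assms by (simp add: ln_div algebra_simps)
qed

text \<open>Jensen's inequality for the jointly convex function (u, v) \<mapsto> u ln (u / v) - u + v.\<close>
lemma log_sum_inequality:
  assumes fpos: "\<And>x. \<forall>j<n. x j \<in> S \<Longrightarrow> 0 < f x" and hpos: "\<And>x. \<forall>j<n. x j \<in> S \<Longrightarrow> 0 < h x"
  shows "E n f * ln (E n f / E n h) - E n f + E n h \<le> E n (\<lambda>x. f x * ln (f x / h x) - f x + h x)"
proof -
  define a where "a = E n f"
  define b where "b = E n h"
  have a: "0 < a" unfolding a_def by (rule prod_expect_pos[OF fpos])
  have b: "0 < b" unfolding b_def by (rule prod_expect_pos[OF hpos])
  have "a * ln (a / b) = E n (\<lambda>x. (ln (a / b) + 1) * f x + (- (a / b)) * h x)"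
    unfolding prod_expect_linear a_def b_def using b by (simp add: b_def algebra_simps)
  also have "\<dots> \<le> E n (\<lambda>x. f x * ln (f x / h x))"
  proof (rule prod_expect_mono)
    fix x assume "\<forall>j<n. x j \<in> S"
    from ln_tangent_bound[OF fpos[OF this] hpos[OF this] a b]
    show "(ln (a / b) + 1) * f x + - (a / b) * h x \<le> f x * ln (f x / h x)"
      by (simp add: algebra_simps)
  qed
  finally show ?thesis
    unfolding prod_expect_add prod_expect_diff a_def b_def by simp
qed

text \<open>Same induction as for efron_stein, with the variational formula
  E(\<phi> ln \<phi>) - E \<phi> ln E \<phi> \<le> E(\<phi> ln (\<phi> / c) - \<phi> + c) for the entropy in place of the one for the variance.\<close>
theorem entropy_tensorization:
  assumes "\<And>x. \<forall>j<n. x j \<in> S \<Longrightarrow> 0 < f x"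
    and "\<And>i x. i < n \<Longrightarrow> \<forall>j<n. x j \<in> S \<Longrightarrow> 0 < g i x"
    and "\<And>i. i < n \<Longrightarrow> ignores_coordinate n S i (g i)"
  shows "E n (\<lambda>x. f x * ln (f x)) - E n f * ln (E n f)
     \<le> (\<Sum>i<n. E n (\<lambda>x. f x * ln (f x / g i x) - f x + g i x))"
  using assms
proof (induction n arbitrary: f g)
  case (Suc n)
  define fv where "fv v = (\<lambda>x. f (x(n := v)))" for v
  define gv where "gv v i = (\<lambda>x. g i (x(n := v)))" for v i
  define a where "a v = E n (fv v)" for v
  obtain v0 where v0: "v0 \<in> S" using support_nonempty by auto
  define b where "b = E n (gv v0 n)"
  define A where "A = (\<Sum>v\<in>S. p n v * a v)"
  have fv_pos: "0 < fv v x" if "v \<in> S" "\<forall>j<n. x j \<in> S" for v x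
    unfolding fv_def by (rule Suc.prems(1)[OF fun_upd_coordinates_in[OF that(2,1)]])
  have gv_pos: "0 < gv v i x" if "v \<in> S" "\<forall>j<n. x j \<in> S" "i < Suc n" for v x i
    unfolding gv_def by (rule Suc.prems(2)[OF that(3) fun_upd_coordinates_in[OF that(2,1)]])
  have a_pos: "0 < a v" if "v \<in> S" for v
    unfolding a_def by (rule prod_expect_pos) (rule fv_pos[OF that])
  have b_pos: "0 < b" unfolding b_def by (rule prod_expect_pos) (rule gv_pos[OF v0], auto)
  have "0 < E (Suc n) f" by (rule prod_expect_pos) (rule Suc.prems(1))
  then have A_pos: "0 < A" by (simp add: A_def a_def fv_def)
  have cond_ent: "E n (\<lambda>x. fv v x * ln (fv v x)) - a v * ln (a v)
      \<le> (\<Sum>i<n. E n (\<lambda>x. fv v x * ln (fv v x / gv v i x) - fv v x + gv v i x))"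
    if "v \<in> S" for v
    unfolding a_def
  proof (rule Suc.IH)
    show "0 < fv v x" if "\<forall>j<n. x j \<in> S" for x by (rule fv_pos[OF \<open>v \<in> S\<close> that])
    show "0 < gv v i x" if "i < n" "\<forall>j<n. x j \<in> S" for i x
      using gv_pos[OF \<open>v \<in> S\<close> that(2)] that(1) by simp
    show "ignores_coordinate n S i (gv v i)" if "i < n" for i
      unfolding gv_def using Suc.prems(3) that \<open>v \<in> S\<close> by (auto intro!: ignores_coordinate_fix_last)
  qed
  have ent_of_mean: "(\<Sum>v\<in>S. p n v * (a v * ln (a v))) - A * ln A
      \<le> (\<Sum>v\<in>S. p n v * (a v * ln (a v / b) - a v + b))"
  proof -
    have "p n v * (a v * ln (a v / b) - a v + b) =
        p n v * (a v * ln (a v)) + (- (ln b + 1)) * (p n v * a v) + b * p n v" if "v \<in> S" for v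
      using a_pos[OF that] b_pos by (simp add: ln_div algebra_simps)
    then have "(\<Sum>v\<in>S. p n v * (a v * ln (a v / b) - a v + b)) =
        (\<Sum>v\<in>S. p n v * (a v * ln (a v)) + (- (ln b + 1)) * (p n v * a v) + b * p n v)"
      by (rule sum.cong[OF refl])
    also have "\<dots> = (\<Sum>v\<in>S. p n v * (a v * ln (a v))) + (- (ln b + 1)) * A + b"
      unfolding sum.distrib sum_distrib_left[symmetric] weights_sum_1 A_def by simp
    finally have "(\<Sum>v\<in>S. p n v * (a v * ln (a v / b) - a v + b)) =
        (\<Sum>v\<in>S. p n v * (a v * ln (a v))) + (- (ln b + 1)) * A + b" .
    moreover have "A * ln b - A * ln A \<le> b - A"
    proof -
      have "A * ln (b / A) \<le> A * (b / A - 1)"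
        using A_pos b_pos by (intro mult_left_mono ln_le_minus_one) auto
      moreover have "A * (b / A - 1) = b - A" using A_pos by (simp add: field_simps)
      moreover have "ln (b / A) = ln b - ln A" using A_pos b_pos by (simp add: ln_div)
      ultimately show ?thesis by (simp add: right_diff_distrib)
    qed
    ultimately show ?thesis by (simp add: algebra_simps)
  qed
  have mean_div: "a v * ln (a v / b) - a v + b
      \<le> E n (\<lambda>x. fv v x * ln (fv v x / gv v n x) - fv v x + gv v n x)" if "v \<in> S" for v
  proof -
    have "b = E n (gv v n)"
      unfolding b_def gv_def by (rule prod_expect_ignores_last[OF Suc.prems(3)[OF lessI] v0 that])
    then show ?thesis
      using log_sum_inequality[of n "fv v" "gv v n"] fv_pos[OF that] gv_pos[OF that]
      unfolding a_def by simp
  qed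
  have "E (Suc n) (\<lambda>x. f x * ln (f x)) - E (Suc n) f * ln (E (Suc n) f) =
      (\<Sum>v\<in>S. p n v * (E n (\<lambda>x. fv v x * ln (fv v x)) - a v * ln (a v))) +
      ((\<Sum>v\<in>S. p n v * (a v * ln (a v))) - A * ln A)"
    by (simp add: A_def a_def fv_def sum_subtractf right_diff_distrib)
  also have "\<dots> \<le> (\<Sum>v\<in>S. p n v *
        (\<Sum>i<n. E n (\<lambda>x. fv v x * ln (fv v x / gv v i x) - fv v x + gv v i x)))
      + (\<Sum>v\<in>S. p n v * E n (\<lambda>x. fv v x * ln (fv v x / gv v n x) - fv v x + gv v n x))"
  proof (rule add_mono)
    show "(\<Sum>v\<in>S. p n v * (E n (\<lambda>x. fv v x * ln (fv v x)) - a v * ln (a v)))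
        \<le> (\<Sum>v\<in>S. p n v *
          (\<Sum>i<n. E n (\<lambda>x. fv v x * ln (fv v x / gv v i x) - fv v x + gv v i x)))"
      by (rule sum_mono, rule mult_left_mono[OF cond_ent weight_nonneg])
    have "(\<Sum>v\<in>S. p n v * (a v * ln (a v / b) - a v + b))
        \<le> (\<Sum>v\<in>S. p n v * E n (\<lambda>x. fv v x * ln (fv v x / gv v n x) - fv v x + gv v n x))"
      by (rule sum_mono, rule mult_left_mono[OF mean_div weight_nonneg])
    with ent_of_mean show "(\<Sum>v\<in>S. p n v * (a v * ln (a v))) - A * ln A
        \<le> (\<Sum>v\<in>S. p n v * E n (\<lambda>x. fv v x * ln (fv v x / gv v n x) - fv v x + gv v n x))"
      by linarith
  qed
  also have "\<dots> = (\<Sum>i<Suc n. E (Suc n) (\<lambda>x. f x * ln (f x / g i x) - f x + g i x))"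
    unfolding sum.lessThan_Suc prod_expect.simps fv_def gv_def sum_distrib_left
    by (simp only: sum.swap[of _ S])
  finally show ?case .
qed simp

lemma has_real_derivative_prod_expect:
  assumes "\<And>x. ((\<lambda>l. f l x) has_real_derivative f' x) (at l)"
  shows "((\<lambda>l. E n (f l)) has_real_derivative E n f') (at l)"
  using assms
proof (induction n arbitrary: f f')
  case (Suc n)
  have "((\<lambda>l. E n (\<lambda>x. f l (x(n := v)))) has_real_derivative E n (\<lambda>x. f' (x(n := v)))) (at l)" for v
    by (rule Suc.IH) (rule Suc.prems)
  then show ?case unfolding prod_expect.simps by (intro DERIV_sum DERIV_cmult)
qed simp

lemma prod_expect_eq_sum_PiE: "E n f = (\<Sum>x\<in>PiE {..<n} (\<lambda>_. S). (\<Prod>i<n. p i (x i)) * f x)"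
proof (induction n arbitrary: f)
  case (Suc n)
  let ?P = "PiE {..<n} (\<lambda>_. S)"
  have P_Suc: "PiE {..<Suc n} (\<lambda>_. S) = (\<lambda>(y, g). g(n := y)) ` (S \<times> ?P)"
    using PiE_insert_eq[of n "{..<n}" "\<lambda>_. S"] by (simp add: lessThan_Suc)
  have inj: "inj_on (\<lambda>(y, g). g(n := y)) (S \<times> ?P)" by (rule inj_combinator) simp
  have weight_upd: "(\<Prod>i<Suc n. p i ((y(n := v)) i)) = p n v * (\<Prod>i<n. p i (y i))" for v y
  proof -
    have "(\<Prod>i<n. p i ((y(n := v)) i)) = (\<Prod>i<n. p i (y i))" by (rule prod.cong) auto
    then show ?thesis by (simp add: prod.lessThan_Suc)
  qed
  have "(\<Sum>x\<in>PiE {..<Suc n} (\<lambda>_. S). (\<Prod>i<Suc n. p i (x i)) * f x)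
      = (\<Sum>v\<in>S. \<Sum>y\<in>?P. (\<Prod>i<Suc n. p i ((y(n := v)) i)) * f (y(n := v)))"
    unfolding P_Suc sum.reindex[OF inj] by (simp add: sum.cartesian_product' split_beta)
  also have "\<dots> = E (Suc n) f"
    unfolding weight_upd by (simp add: Suc.IH sum_distrib_left mult.assoc)
  finally show ?case by simp
qed simp

end

section \<open>Elementary inequalities for the exponential\<close>

lemma nonneg_if_deriv_nonneg:
  fixes f :: "real \<Rightarrow> real"
  assumes "\<And>x. 0 \<le> x \<Longrightarrow> (f has_real_derivative f' x) (at x)"
    and "\<And>x. 0 \<le> x \<Longrightarrow> 0 \<le> f' x" and "0 \<le> f 0" and "0 \<le> y"
  shows "0 \<le> f y"
proof -
  have "f 0 \<le> f y"
    by (rule DERIV_nonneg_imp_nondecreasing[OF assms(4)]) (use assms(1,2) in blast)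
  then show ?thesis using assms(3) by simp
qed

lemma exp_neg_add_le_half_square:
  fixes s :: real
  assumes "0 \<le> s"
  shows "exp (- s) + s - 1 \<le> s\<^sup>2 / 2"
proof -
  have "0 \<le> s\<^sup>2 / 2 - exp (- s) - s + 1"
  proof (rule nonneg_if_deriv_nonneg[where f = "\<lambda>s. s\<^sup>2 / 2 - exp (- s) - s + 1"])
    fix x :: real assume "0 \<le> x"
    show "((\<lambda>s. s\<^sup>2 / 2 - exp (- s) - s + 1) has_real_derivative (x + exp (- x) - 1)) (at x)"
      by (auto intro!: derivative_eq_intros simp: field_simps)
    show "0 \<le> x + exp (- x) - 1" using exp_ge_add_one_self[of "- x"] by simp
  qed (use assms in auto)
  then show ?thesis by simp
qed

text \<open>Clear the denominator and differentiate twice.\<close>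
lemma exp_sub_le_bernstein:
  fixes l :: real
  assumes "0 \<le> l" "l < 3"
  shows "exp l - l - 1 \<le> l\<^sup>2 / (2 * (1 - l / 3))"
proof -
  have d2: "0 \<le> 1 - exp x + x * exp x" if "0 \<le> x" for x :: real
  proof (rule nonneg_if_deriv_nonneg[where f = "\<lambda>x. 1 - exp x + x * exp x"])
    fix y :: real assume "0 \<le> y"
    show "((\<lambda>x. 1 - exp x + x * exp x) has_real_derivative (y * exp y)) (at y)"
      by (auto intro!: derivative_eq_intros simp: field_simps)
    show "0 \<le> y * exp y" using \<open>0 \<le> y\<close> by simp
  qed (use that in auto)
  have d1: "0 \<le> 2 * x + (2/3) * (exp x - x - 1) - (2 - 2 * x / 3) * (exp x - 1)"
    if "0 \<le> x" for x :: real
  proof (rule nonneg_if_deriv_nonneg[where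
        f = "\<lambda>x. 2 * x + (2/3) * (exp x - x - 1) - (2 - 2 * x / 3) * (exp x - 1)"])
    fix y :: real assume "0 \<le> y"
    show "((\<lambda>x. 2 * x + (2/3) * (exp x - x - 1) - (2 - 2 * x / 3) * (exp x - 1))
        has_real_derivative ((2/3) * (1 - exp y + y * exp y))) (at y)"
      by (auto intro!: derivative_eq_intros simp: field_simps)
    show "0 \<le> (2/3) * (1 - exp y + y * exp y)" using d2[OF \<open>0 \<le> y\<close>] by simp
  qed (use that in auto)
  have "0 \<le> l\<^sup>2 - (2 - 2 * l / 3) * (exp l - l - 1)"
  proof (rule nonneg_if_deriv_nonneg[where f = "\<lambda>x. x\<^sup>2 - (2 - 2 * x / 3) * (exp x - x - 1)"])
    fix y :: real assume "0 \<le> y"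
    show "((\<lambda>x. x\<^sup>2 - (2 - 2 * x / 3) * (exp x - x - 1)) has_real_derivative
        (2 * y + (2/3) * (exp y - y - 1) - (2 - 2 * y / 3) * (exp y - 1))) (at y)"
      by (auto intro!: derivative_eq_intros simp: field_simps)
    show "0 \<le> 2 * y + (2/3) * (exp y - y - 1) - (2 - 2 * y / 3) * (exp y - 1)"
      by (rule d1[OF \<open>0 \<le> y\<close>])
  qed (use assms in auto)
  moreover have "0 < 2 * (1 - l / 3)" using assms by simp
  ultimately show ?thesis by (simp add: field_simps)
qed

lemma exp_entropy_term_le:
  fixes l z d :: real
  assumes "0 \<le> d" "d \<le> 1"
  shows "exp (l * z) * ln (exp (l * z) / exp (l * (z - d))) - exp (l * z) + exp (l * (z - d))
     \<le> (exp (- l) + l - 1) * d * exp (l * z)"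
proof -
  have "ln (exp (l * z) / exp (l * (z - d))) = l * d"
    by (simp add: exp_diff[symmetric] algebra_simps)
  moreover have "exp (l * (z - d)) = exp (l * z) * exp ((- l) * d)"
    by (simp add: exp_add[symmetric] algebra_simps)
  moreover have "exp ((- l) * d) \<le> 1 - d + d * exp (- l)"
    using convex_onD[OF exp_convex, of d 0 "- l"] assms by (simp add: mult.commute)
  then have "exp (l * z) * exp ((- l) * d) \<le> exp (l * z) * (1 - d + d * exp (- l))"
    by (rule mult_left_mono) simp
  ultimately show ?thesis by (simp add: algebra_simps)
qed
section \<open>Concentration of self-bounded functions\<close>

locale self_bounding = product_weights +
  fixes n :: nat and Z :: "(nat \<Rightarrow> 'a) \<Rightarrow> real" and W :: "nat \<Rightarrow> (nat \<Rightarrow> 'a) \<Rightarrow> real"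
  assumes drop_bounds: "\<And>x i. \<forall>j<n. x j \<in> S \<Longrightarrow> i < n \<Longrightarrow> 0 \<le> Z x - W i x \<and> Z x - W i x \<le> 1"
    and sum_drops_le: "\<And>x. \<forall>j<n. x j \<in> S \<Longrightarrow> (\<Sum>i<n. Z x - W i x) \<le> Z x"
    and W_ignores_coordinate: "\<And>i. i < n \<Longrightarrow> ignores_coordinate n S i (W i)"
begin

lemma Z_nonneg: "\<forall>j<n. x j \<in> S \<Longrightarrow> 0 \<le> Z x"
  using sum_drops_le[of x] sum_nonneg[of "{..<n}" "\<lambda>i. Z x - W i x"] drop_bounds[of x] by force

lemma expectation_nonneg: "0 \<le> E n Z"
  by (rule prod_expect_nonneg) (rule Z_nonneg)

theorem variance_le_expectation: "E n (\<lambda>x. (Z x - E n Z)\<^sup>2) \<le> E n Z"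
proof -
  have "E n (\<lambda>x. (Z x - E n Z)\<^sup>2) \<le> (\<Sum>i<n. E n (\<lambda>x. (Z x - W i x)\<^sup>2))"
    unfolding prod_expect_variance by (rule efron_stein) (rule W_ignores_coordinate)
  also have "\<dots> \<le> (\<Sum>i<n. E n (\<lambda>x. Z x - W i x))"
  proof (rule sum_mono, rule prod_expect_mono)
    fix i x assume "i \<in> {..<n}" "\<forall>j<n. x j \<in> S"
    then have "0 \<le> Z x - W i x" "Z x - W i x \<le> 1" using drop_bounds by auto
    then show "(Z x - W i x)\<^sup>2 \<le> Z x - W i x"
      by (simp add: power2_eq_square mult_left_le)
  qed
  also have "\<dots> = E n (\<lambda>x. \<Sum>i<n. Z x - W i x)" by (simp add: prod_expect_sum)
  also have "\<dots> \<le> E n Z" by (rule prod_expect_mono) (rule sum_drops_le)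
  finally show ?thesis .
qed

definition mgf :: "real \<Rightarrow> real" where "mgf l = E n (\<lambda>x. exp (l * Z x))"
definition mgf' :: "real \<Rightarrow> real" where "mgf' l = E n (\<lambda>x. Z x * exp (l * Z x))"

lemma mgf_pos: "0 < mgf l"
  unfolding mgf_def by (rule prod_expect_pos) simp

lemma mgf_0: "mgf 0 = 1"
  unfolding mgf_def by (simp add: prod_expect_const)

lemma mgf_has_derivative: "(mgf has_real_derivative mgf' l) (at l)"
  unfolding mgf_def[abs_def] mgf'_def
  by (rule has_real_derivative_prod_expect) (auto intro!: derivative_eq_intros)

lemma ln_mgf_has_derivative: "((\<lambda>l. ln (mgf l)) has_real_derivative (mgf' l / mgf l)) (at l)"
  using mgf_has_derivative[of l] mgf_pos[of l] by (auto intro!: derivative_eq_intros)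

text \<open>Modified logarithmic Sobolev inequality: tensorize the entropy of e^{\<lambda>Z} with g_i = e^{\<lambda>W_i}.\<close>
lemma modified_log_sobolev: "(1 - exp (- l)) * mgf' l \<le> mgf l * ln (mgf l)"
proof -
  let ?f = "\<lambda>x. exp (l * Z x)"
  have "E n (\<lambda>x. ?f x * ln (?f x)) - mgf l * ln (mgf l)
     \<le> (\<Sum>i<n. E n (\<lambda>x. ?f x * ln (?f x / exp (l * W i x)) - ?f x + exp (l * W i x)))"
    unfolding mgf_def
  proof (rule entropy_tensorization)
    show "ignores_coordinate n S i (\<lambda>x. exp (l * W i x))" if "i < n" for i
      using W_ignores_coordinate[OF that] unfolding ignores_coordinate_def by simp
  qed auto
  also have "\<dots> \<le> (\<Sum>i<n. E n (\<lambda>x. (exp (- l) + l - 1) * (Z x - W i x) * ?f x))"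
  proof (rule sum_mono, rule prod_expect_mono)
    fix i x assume "i \<in> {..<n}" "\<forall>j<n. x j \<in> S"
    then have "0 \<le> Z x - W i x" "Z x - W i x \<le> 1" using drop_bounds by auto
    from exp_entropy_term_le[OF this, of l "Z x"]
    show "?f x * ln (?f x / exp (l * W i x)) - ?f x + exp (l * W i x)
        \<le> (exp (- l) + l - 1) * (Z x - W i x) * ?f x" by simp
  qed
  also have "\<dots> = E n (\<lambda>x. ((exp (- l) + l - 1) * ?f x) * (\<Sum>i<n. Z x - W i x))"
    by (simp add: prod_expect_sum sum_distrib_left mult_ac)
  also have "\<dots> \<le> E n (\<lambda>x. (exp (- l) + l - 1) * (Z x * ?f x))"
  proof (rule prod_expect_mono)
    fix x assume x: "\<forall>j<n. x j \<in> S"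
    have "0 \<le> exp (- l) + l - 1" using exp_ge_add_one_self[of "- l"] by simp
    then have "((exp (- l) + l - 1) * ?f x) * (\<Sum>i<n. Z x - W i x)
        \<le> ((exp (- l) + l - 1) * ?f x) * Z x"
      by (intro mult_left_mono[OF sum_drops_le[OF x]]) simp
    then show "((exp (- l) + l - 1) * ?f x) * (\<Sum>i<n. Z x - W i x)
        \<le> (exp (- l) + l - 1) * (Z x * ?f x)" by (simp add: mult_ac)
  qed
  also have "\<dots> = (exp (- l) + l - 1) * mgf' l" unfolding prod_expect_cmult mgf'_def ..
  finally have "E n (\<lambda>x. ?f x * ln (?f x)) - mgf l * ln (mgf l) \<le> (exp (- l) + l - 1) * mgf' l" .
  moreover have "E n (\<lambda>x. ?f x * ln (?f x)) = l * mgf' l"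
    unfolding mgf'_def prod_expect_cmult[symmetric] by (simp add: mult_ac)
  ultimately show ?thesis by (simp add: algebra_simps)
qed

text \<open>Herbst's argument: by the modified log-Sobolev inequality, the quotient
  herbst l = ln (mgf l) / (e^l - 1) has nonpositive derivative away from 0, and it tends to
  mgf' 0 = E Z at 0.\<close>
definition herbst :: "real \<Rightarrow> real" where "herbst l = ln (mgf l) / (exp l - 1)"

lemma herbst_has_derivative:
  assumes "l \<noteq> 0"
  shows "(herbst has_real_derivative
      ((mgf' l / mgf l) * (exp l - 1) - ln (mgf l) * exp l) / (exp l - 1)\<^sup>2) (at l)"
proof -
  have "((\<lambda>l. exp l - 1) has_real_derivative exp l) (at l)"
    by (auto intro!: derivative_eq_intros)
  moreover have "exp l - 1 \<noteq> 0" using assms by simp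
  ultimately show ?thesis
    unfolding herbst_def[abs_def] power2_eq_square
    by (rule DERIV_divide[OF ln_mgf_has_derivative])
qed

lemma herbst_derivative_nonpos:
  "((mgf' l / mgf l) * (exp l - 1) - ln (mgf l) * exp l) / (exp l - 1)\<^sup>2 \<le> 0"
proof -
  have pos: "0 < mgf l" by (rule mgf_pos)
  have "exp l * ((1 - exp (- l)) * mgf' l) \<le> exp l * (mgf l * ln (mgf l))"
    using modified_log_sobolev[of l] by (rule mult_left_mono) simp
  moreover have "exp l * (1 - exp (- l)) = exp l - 1"
    by (simp add: exp_minus right_diff_distrib)
  ultimately have "(exp l - 1) * mgf' l - exp l * (mgf l * ln (mgf l)) \<le> 0"
    by (simp add: mult.assoc[symmetric])
  moreover have "(mgf' l / mgf l) * (exp l - 1) - ln (mgf l) * exp l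
      = ((exp l - 1) * mgf' l - exp l * (mgf l * ln (mgf l))) / mgf l"
    using pos by (simp add: field_simps)
  ultimately have "(mgf' l / mgf l) * (exp l - 1) - ln (mgf l) * exp l \<le> 0"
    using pos by (simp add: divide_nonpos_pos)
  then show ?thesis by (simp add: divide_nonpos_nonneg)
qed

lemma herbst_tendsto: "(herbst \<longlongrightarrow> E n Z) (at 0)"
proof -
  have "((\<lambda>l. ln (mgf l)) has_real_derivative E n Z) (at 0)"
    using ln_mgf_has_derivative[of 0] mgf_0 by (simp add: mgf'_def)
  then have ln_mgf: "((\<lambda>y. ln (mgf y) / y) \<longlongrightarrow> E n Z) (at 0)"
    using mgf_0 by (simp add: has_field_derivative_iff)
  have "(exp has_real_derivative 1) (at (0::real))" using DERIV_exp[of 0] by simp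
  then have exp: "((\<lambda>y. (exp y - 1) / y) \<longlongrightarrow> (1::real)) (at 0)"
    by (simp add: has_field_derivative_iff)
  have "((\<lambda>y. (ln (mgf y) / y) / ((exp y - 1) / y)) \<longlongrightarrow> E n Z / 1) (at 0)"
    by (rule tendsto_divide[OF ln_mgf exp]) simp
  moreover have "\<forall>\<^sub>F y in at 0. (ln (mgf y) / y) / ((exp y - 1) / y) = herbst y"
    by (simp add: eventually_at_filter herbst_def)
  ultimately show ?thesis by (simp add: tendsto_cong)
qed

lemma herbst_antimono:
  assumes "x \<le> y" "0 \<notin> {x..y}"
  shows "herbst y \<le> herbst x"
proof (rule DERIV_nonpos_imp_nonincreasing[OF assms(1)])
  fix z assume "x \<le> z" "z \<le> y"
  then have "z \<noteq> 0" using assms(2) by auto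
  then show "\<exists>d. (herbst has_real_derivative d) (at z) \<and> d \<le> 0"
    using herbst_has_derivative herbst_derivative_nonpos by blast
qed

lemma ln_mgf_le: "ln (mgf l) \<le> E n Z * (exp l - 1)"
proof (cases l "0 :: real" rule: linorder_cases)
  case less
  have "E n Z \<le> herbst l"
  proof (rule tendsto_upperbound[OF tendsto_within_subset[OF herbst_tendsto]])
    show "\<forall>\<^sub>F y in at_left 0. herbst y \<le> herbst l"
      by (rule eventually_at_leftI[of l 0]) (use less herbst_antimono in auto)
  qed auto
  moreover have "exp l - 1 < 0" using less by simp
  ultimately show ?thesis unfolding herbst_def by (simp add: le_divide_eq mult.commute)
next
  case greater
  have "herbst l \<le> E n Z"
  proof (rule tendsto_lowerbound[OF tendsto_within_subset[OF herbst_tendsto]])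
    show "\<forall>\<^sub>F y in at_right 0. herbst l \<le> herbst y"
      by (rule eventually_at_rightI[of 0 l]) (use greater herbst_antimono in auto)
  qed auto
  moreover have "0 < exp l - 1" using greater by simp
  ultimately show ?thesis unfolding herbst_def by (simp add: divide_le_eq mult.commute)
qed (simp add: mgf_0)

theorem ln_mgf_centered_le: "ln (E n (\<lambda>x. exp (l * (Z x - E n Z)))) \<le> E n Z * (exp l - l - 1)"
proof -
  have "E n (\<lambda>x. exp (l * (Z x - E n Z))) = E n (\<lambda>x. exp (- (l * E n Z)) * exp (l * Z x))"
    by (rule prod_expect_cong) (simp add: exp_add[symmetric] algebra_simps)
  also have "\<dots> = exp (- (l * E n Z)) * mgf l"
    unfolding mgf_def by (rule prod_expect_cmult)
  finally show ?thesis
    using ln_mgf_le[of l] mgf_pos[of l] by (simp add: ln_mult algebra_simps)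
qed

lemma centered_mgf_le: "E n (\<lambda>x. exp (l * (Z x - E n Z))) \<le> exp (E n Z * (exp l - l - 1))"
proof -
  have "0 < E n (\<lambda>x. exp (l * (Z x - E n Z)))" by (rule prod_expect_pos) simp
  then show ?thesis using ln_mgf_centered_le[of l] by (metis exp_le_cancel_iff exp_ln)
qed

lemma chernoff_bound:
  assumes "0 \<le> l"
  shows "E n (\<lambda>x. if t \<le> l' * (Z x - E n Z) then 1 else 0)
    \<le> exp (E n Z * (exp (l * l') - l * l' - 1) - l * t)"
proof -
  have "E n (\<lambda>x. if t \<le> l' * (Z x - E n Z) then 1 else 0)
      \<le> E n (\<lambda>x. exp (- (l * t)) * exp ((l * l') * (Z x - E n Z)))"
  proof (rule prod_expect_mono)
    fix x
    have "exp (- (l * t)) * exp ((l * l') * (Z x - E n Z)) = exp (l * (l' * (Z x - E n Z) - t))"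
      by (simp add: exp_add[symmetric] algebra_simps)
    then show "(if t \<le> l' * (Z x - E n Z) then 1 else 0)
        \<le> exp (- (l * t)) * exp ((l * l') * (Z x - E n Z))"
      using assms by auto
  qed
  also have "\<dots> \<le> exp (- (l * t)) * exp (E n Z * (exp (l * l') - l * l' - 1))"
    unfolding prod_expect_cmult by (rule mult_left_mono[OF centered_mgf_le]) simp
  also have "\<dots> = exp (E n Z * (exp (l * l') - l * l' - 1) - l * t)"
    by (simp add: exp_add[symmetric])
  finally show ?thesis .
qed

theorem upper_tail:
  assumes t: "0 < t"
  shows "E n (\<lambda>x. if t \<le> Z x - E n Z then 1 else 0) \<le> exp (- (t\<^sup>2 / (2 * (E n Z + t / 3))))"
proof (cases "E n Z = 0")
  case True
  have "E n (\<lambda>x. if t \<le> Z x - E n Z then 1 else 0) \<le> exp (E n Z * (exp 3 - 3 - 1) - 3 * t)"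
    using chernoff_bound[of 3 t 1] by simp
  also have "\<dots> \<le> exp (- (t\<^sup>2 / (2 * (E n Z + t / 3))))"
    using True t by (simp add: power2_eq_square field_simps)
  finally show ?thesis .
next
  case False
  define \<mu> where "\<mu> = E n Z"
  have mu: "0 < \<mu>" using False expectation_nonneg unfolding \<mu>_def by simp
  define D where "D = \<mu> + t / 3"
  have D: "0 < D" using mu t unfolding D_def by simp
  define l where "l = t / D"
  have l: "0 \<le> l" "l < 3" using t D mu unfolding l_def D_def by (simp_all add: field_simps)
  have one_minus_l: "1 - l / 3 = \<mu> / D" using D unfolding l_def D_def by (simp add: field_simps)
  have "E n (\<lambda>x. if t \<le> Z x - E n Z then 1 else 0) \<le> exp (\<mu> * (exp l - l - 1) - l * t)"
    unfolding \<mu>_def using chernoff_bound[OF l(1), of t 1] by simp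
  also have "\<dots> \<le> exp (\<mu> * (l\<^sup>2 / (2 * (1 - l / 3))) - l * t)"
    using mult_left_mono[OF exp_sub_le_bernstein[OF l], of \<mu>] mu by simp
  also have "\<mu> * (l\<^sup>2 / (2 * (1 - l / 3))) - l * t = - (t\<^sup>2 / (2 * D))"
    unfolding one_minus_l using mu D unfolding l_def by (simp add: field_simps power2_eq_square)
  finally show ?thesis unfolding D_def \<mu>_def .
qed

theorem lower_tail:
  assumes t: "0 < t"
  shows "E n (\<lambda>x. if Z x - E n Z \<le> - t then 1 else 0) \<le> exp (- (t\<^sup>2 / (2 * E n Z)))"
proof (cases "E n Z = 0")
  case True
  have "E n (\<lambda>x. if Z x - E n Z \<le> - t then 1 else 0) \<le> E n (\<lambda>x. 1)"
    by (rule prod_expect_mono) simp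
  then show ?thesis using True by (simp add: prod_expect_const)
next
  case False
  define \<mu> where "\<mu> = E n Z"
  have mu: "0 < \<mu>" using False expectation_nonneg unfolding \<mu>_def by simp
  define s where "s = t / \<mu>"
  have s: "0 \<le> s" using t mu unfolding s_def by simp
  have "E n (\<lambda>x. if Z x - E n Z \<le> - t then 1 else 0) \<le> exp (\<mu> * (exp (- s) + s - 1) - s * t)"
    unfolding \<mu>_def using chernoff_bound[OF s, of t "- 1"] by (simp add: le_minus_iff)
  also have "\<dots> \<le> exp (\<mu> * (s\<^sup>2 / 2) - s * t)"
    using mult_left_mono[OF exp_neg_add_le_half_square[OF s], of \<mu>] mu by simp
  also have "\<mu> * (s\<^sup>2 / 2) - s * t = - (t\<^sup>2 / (2 * \<mu>))"
    using mu unfolding s_def by (simp add: field_simps power2_eq_square)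
  finally show ?thesis unfolding \<mu>_def .
qed

end

section \<open>Reduction to a finite product space\<close>

lemma (in prob_space) expectation_finite_range:
  assumes "finite A" "\<And>\<omega>. \<omega> \<in> space M \<Longrightarrow> Y \<omega> \<in> A"
    and "\<And>x. x \<in> A \<Longrightarrow> {\<omega> \<in> space M. Y \<omega> = x} \<in> events"
  shows "expectation (\<lambda>\<omega>. H (Y \<omega>)) = (\<Sum>x\<in>A. H x * prob {\<omega> \<in> space M. Y \<omega> = x})"
proof -
  have integrable: "integrable M (indicator {\<omega> \<in> space M. Y \<omega> = x} :: 'a \<Rightarrow> real)" if "x \<in> A" for x
    using assms(3)[OF that] by (intro integrable_real_indicator) (auto simp: top.not_eq_extremum[symmetric])
  have "expectation (\<lambda>\<omega>. H (Y \<omega>))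
      = expectation (\<lambda>\<omega>. \<Sum>x\<in>A. H x * indicator {\<omega> \<in> space M. Y \<omega> = x} \<omega>)"
  proof (rule Bochner_Integration.integral_cong[OF refl])
    fix \<omega> assume \<omega>: "\<omega> \<in> space M"
    have "(\<Sum>x\<in>A. H x * indicator {\<omega> \<in> space M. Y \<omega> = x} \<omega>) = (\<Sum>x\<in>A. if Y \<omega> = x then H x else 0)"
      by (rule sum.cong) (auto simp: indicator_def \<omega>)
    also have "\<dots> = H (Y \<omega>)" using assms(1,2) \<omega> by (simp add: sum.delta)
    finally show "H (Y \<omega>) = (\<Sum>x\<in>A. H x * indicator {\<omega> \<in> space M. Y \<omega> = x} \<omega>)" by simp
  qed
  also have "\<dots> = (\<Sum>x\<in>A. expectation (\<lambda>\<omega>. H x * indicator {\<omega> \<in> space M. Y \<omega> = x} \<omega>))"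
    using integrable by (intro Bochner_Integration.integral_sum) simp
  also have "\<dots> = (\<Sum>x\<in>A. H x * prob {\<omega> \<in> space M. Y \<omega> = x})"
    using integrable assms(3) by (intro sum.cong) (simp_all add: Int_absorb2)
  finally show ?thesis .
qed

lemma (in prob_space) prob_eq_expectation_of_bool:
  "prob {\<omega> \<in> space M. Q \<omega>} = expectation (\<lambda>\<omega>. if Q \<omega> then 1 else 0)"
proof -
  have "expectation (\<lambda>\<omega>. if Q \<omega> then 1 else 0) = expectation (indicator {\<omega> \<in> space M. Q \<omega>})"
    by (rule Bochner_Integration.integral_cong) (auto simp: indicator_def)
  also have "\<dots> = prob {\<omega> \<in> space M. Q \<omega>}"
    by (simp add: Int_absorb2[of "{\<omega> \<in> space M. Q \<omega>}" "space M"])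
  finally show ?thesis by simp
qed

text \<open>The coordinates i \<ge> n carry a dummy point mass, so that the weights sum to 1 for every i.\<close>
definition trunc_weights :: "'a measure \<Rightarrow> (nat \<Rightarrow> 'a \<Rightarrow> nat) \<Rightarrow> nat \<Rightarrow> nat \<Rightarrow> nat \<Rightarrow> nat \<Rightarrow> real"
  where "trunc_weights M X n N i v =
    (if i < n then measure M {\<omega> \<in> space M. min (X i \<omega>) N = v} else of_bool (v = 1))"

lemma min_level_set_in_sets:
  assumes "X \<in> measurable M (count_space UNIV)"
  shows "{\<omega> \<in> space M. min (X \<omega>) N = v} \<in> sets M"
  using measurable_sets[OF assms, of "{k. min k N = v}"] by (simp add: vimage_def Int_def conj_commute)

lemma product_weights_trunc_weights:
  assumes "prob_space M" "1 \<le> N"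
    and rv: "\<And>i. i < n \<Longrightarrow> X i \<in> measurable M (count_space UNIV)"
    and pos: "\<And>i \<omega>. i < n \<Longrightarrow> \<omega> \<in> space M \<Longrightarrow> X i \<omega> \<ge> 1"
  shows "product_weights (trunc_weights M X n N) {1..N}"
proof
  interpret P: prob_space M by fact
  fix i
  show "(\<Sum>v\<in>{1..N}. trunc_weights M X n N i v) = 1"
  proof (cases "i < n")
    case True
    have "(\<Sum>v\<in>{1..N}. trunc_weights M X n N i v)
        = (\<Sum>v\<in>{1..N}. P.prob {\<omega> \<in> space M. min (X i \<omega>) N = v})"
      unfolding trunc_weights_def using True by simp
    also have "\<dots> = P.prob (\<Union>v\<in>{1..N}. {\<omega> \<in> space M. min (X i \<omega>) N = v})"
      using min_level_set_in_sets[OF rv[OF True]]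
      by (intro P.finite_measure_finite_Union[symmetric]) (auto simp: disjoint_family_on_def)
    also have "(\<Union>v\<in>{1..N}. {\<omega> \<in> space M. min (X i \<omega>) N = v}) = space M"
      using pos[OF True] \<open>1 \<le> N\<close> by auto
    finally show ?thesis by (simp add: P.prob_space)
  next
    case False
    then show ?thesis using \<open>1 \<le> N\<close> by (simp add: trunc_weights_def sum.delta')
  qed
qed (auto simp: trunc_weights_def)

lemma prob_trunc_sample:
  assumes "prob_space M"
    and indep: "prob_space.indep_vars M (\<lambda>_. count_space UNIV) X {..<n}"
    and x: "x \<in> PiE {..<n} (\<lambda>_. {1..N})"
  shows "measure M {\<omega> \<in> space M. restrict (\<lambda>i. min (X i \<omega>) N) {..<n} = x}
    = (\<Prod>i<n. trunc_weights M X n N i (x i))"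
proof (cases "n = 0")
  case True
  then show ?thesis using x prob_space.prob_space[OF assms(1)] by (simp add: restrict_def)
next
  case False
  interpret P: prob_space M by fact
  have "{\<omega> \<in> space M. restrict (\<lambda>i. min (X i \<omega>) N) {..<n} = x}
      = (\<Inter>i\<in>{..<n}. X i -` {k. min k N = x i} \<inter> space M)"
    using x False by (auto simp: PiE_def extensional_def fun_eq_iff)
  moreover have "P.prob (\<Inter>i\<in>{..<n}. X i -` {k. min k N = x i} \<inter> space M)
      = (\<Prod>i\<in>{..<n}. P.prob (X i -` {k. min k N = x i} \<inter> space M))"
    by (rule P.indep_varsD_finite[OF indep]) (use False in auto)
  ultimately have "P.prob {\<omega> \<in> space M. restrict (\<lambda>i. min (X i \<omega>) N) {..<n} = x}
      = (\<Prod>i\<in>{..<n}. P.prob (X i -` {k. min k N = x i} \<inter> space M))"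
    by simp
  also have "\<dots> = (\<Prod>i<n. trunc_weights M X n N i (x i))"
    unfolding trunc_weights_def by (intro prod.cong) (auto intro: arg_cong[where f = "P.prob"])
  finally show ?thesis .
qed

lemma expectation_trunc_sample:
  assumes "prob_space M" "1 \<le> N"
    and rv: "\<And>i. i < n \<Longrightarrow> X i \<in> measurable M (count_space UNIV)"
    and indep: "prob_space.indep_vars M (\<lambda>_. count_space UNIV) X {..<n}"
    and pos: "\<And>i \<omega>. i < n \<Longrightarrow> \<omega> \<in> space M \<Longrightarrow> X i \<omega> \<ge> 1"
  shows "prob_space.expectation M (\<lambda>\<omega>. H (restrict (\<lambda>i. min (X i \<omega>) N) {..<n}))
    = prod_expect (trunc_weights M X n N) {1..N} n H"
proof -
  interpret P: prob_space M by fact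
  interpret W: product_weights "trunc_weights M X n N" "{1..N}"
    using product_weights_trunc_weights assms by blast
  let ?Y = "\<lambda>\<omega>. restrict (\<lambda>i. min (X i \<omega>) N) {..<n}"
  let ?P = "PiE {..<n} (\<lambda>_. {1..N})"
  have range: "?Y \<omega> \<in> ?P" if "\<omega> \<in> space M" for \<omega>
    using pos[OF _ that] \<open>1 \<le> N\<close> by auto
  have events: "{\<omega> \<in> space M. ?Y \<omega> = x} \<in> P.events" if x: "x \<in> ?P" for x
  proof -
    have "{\<omega> \<in> space M. ?Y \<omega> = x} = space M \<inter> (\<Inter>i\<in>{..<n}. {\<omega> \<in> space M. min (X i \<omega>) N = x i})"
      using x by (auto simp: PiE_def extensional_def fun_eq_iff)
    then show ?thesis using min_level_set_in_sets[OF rv] by auto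
  qed
  have "P.expectation (\<lambda>\<omega>. H (?Y \<omega>)) = (\<Sum>x\<in>?P. H x * P.prob {\<omega> \<in> space M. ?Y \<omega> = x})"
    by (rule P.expectation_finite_range[OF _ range events]) (simp add: finite_PiE)
  also have "\<dots> = (\<Sum>x\<in>?P. (\<Prod>i<n. trunc_weights M X n N i (x i)) * H x)"
    by (intro sum.cong) (simp_all add: prob_trunc_sample[OF assms(1) indep])
  also have "\<dots> = prod_expect (trunc_weights M X n N) {1..N} n H"
    by (rule W.prod_expect_eq_sum_PiE[symmetric])
  finally show ?thesis .
qed

lemma self_bounding_Mn_fun:
  assumes "product_weights p S"
  shows "self_bounding p S n (\<lambda>x. real (Mn_fun n x)) (\<lambda>i x. real (Mn_fun n (x(i := 1))))"
  by (rule self_bounding.intro[OF assms], rule self_bounding_axioms.intro)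
    (use Mn_fun_drop_bounds Mn_fun_self_bounding_sum in \<open>simp_all add: ignores_coordinate_def\<close>)

theorem lemma7:
  fixes M :: "'a measure" and X :: "nat \<Rightarrow> 'a \<Rightarrow> nat" and n :: nat
  assumes "prob_space M"
    and rv: "\<And>i. i < n \<Longrightarrow> X i \<in> measurable M (count_space UNIV)"
    and indep: "prob_space.indep_vars M (\<lambda>_. count_space UNIV) X {..<n}"
    and ident: "\<And>i. i < n \<Longrightarrow> distr M (count_space UNIV) (X i) = distr M (count_space UNIV) (X 0)"
    and pos: "\<And>i \<omega>. i < n \<Longrightarrow> \<omega> \<in> space M \<Longrightarrow> X i \<omega> \<ge> 1"
  defines "Z \<equiv> (\<lambda>\<omega>. real (Mn_fun n (\<lambda>i. X i \<omega>)))"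
  defines "EZ \<equiv> prob_space.expectation M Z"
  shows "self_bounded n {1..} (\<lambda>x. real (Mn_fun n x))
    \<and> prob_space.variance M Z \<le> EZ
    \<and> (\<forall>l::real. ln (prob_space.expectation M (\<lambda>\<omega>. exp (l * (Z \<omega> - EZ)))) \<le> EZ * (exp l - l - 1))
    \<and> (\<forall>t>0. measure M {\<omega> \<in> space M. Z \<omega> - EZ \<ge> t} \<le> exp (- (t\<^sup>2 / (2 * (EZ + t / 3)))))
    \<and> (\<forall>t>0. measure M {\<omega> \<in> space M. Z \<omega> - EZ \<le> - t} \<le> exp (- (t\<^sup>2 / (2 * EZ))))"
proof -
  interpret P: prob_space M by fact
  let ?p = "trunc_weights M X n (Suc n)"
  interpret Q: self_bounding ?p "{1..Suc n}" n "\<lambda>x. real (Mn_fun n x)" "\<lambda>i x. real (Mn_fun n (x(i := 1)))"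
    by (intro self_bounding_Mn_fun product_weights_trunc_weights) (use assms in auto)
  have transfer: "P.expectation (\<lambda>\<omega>. g (Z \<omega>)) = Q.E n (\<lambda>x. g (real (Mn_fun n x)))" for g
  proof -
    have "Z \<omega> = real (Mn_fun n (restrict (\<lambda>i. min (X i \<omega>) (Suc n)) {..<n}))" for \<omega>
      unfolding Z_def by (subst Mn_fun_truncate[of n _ "\<lambda>i. X i \<omega>"]) auto
    then show ?thesis
      using expectation_trunc_sample[OF assms(1) _ rv indep pos, where N = "Suc n"] by simp
  qed
  have EZ: "EZ = Q.E n (\<lambda>x. real (Mn_fun n x))"
    unfolding EZ_def using transfer[of "\<lambda>z. z"] by simp
  show ?thesis
  proof (intro conjI allI impI)
    show "P.variance Z \<le> EZ"
      using transfer[of "\<lambda>z. (z - EZ)\<^sup>2"] Q.variance_le_expectation by (simp add: EZ_def[symmetric] EZ)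
    show "ln (P.expectation (\<lambda>\<omega>. exp (l * (Z \<omega> - EZ)))) \<le> EZ * (exp l - l - 1)" for l
      using transfer[of "\<lambda>z. exp (l * (z - EZ))"] Q.ln_mgf_centered_le[of l] by (simp add: EZ)
    show "P.prob {\<omega> \<in> space M. t \<le> Z \<omega> - EZ} \<le> exp (- (t\<^sup>2 / (2 * (EZ + t / 3))))"
      if "0 < t" for t
      using transfer[of "\<lambda>z. if t \<le> z - EZ then 1 else 0"] Q.upper_tail[OF that]
      by (simp add: P.prob_eq_expectation_of_bool EZ)
    show "P.prob {\<omega> \<in> space M. Z \<omega> - EZ \<le> - t} \<le> exp (- (t\<^sup>2 / (2 * EZ)))"
      if "0 < t" for t
      using transfer[of "\<lambda>z. if z - EZ \<le> - t then 1 else 0"] Q.lower_tail[OF that]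
      by (simp add: P.prob_eq_expectation_of_bool EZ)
  qed (rule self_bounded_Mn_fun)
qed

end
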